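(* Let $X$ be a (real) Banach space with $\dim X>1$. Then $D(X)\ge\sqrt{2}$. More precisely, if $Y$ is any nonzero Banach space, then $d(Y\oplus_1\mathbb{R},\,Y\oplus_2\mathbb{R})\ge d(\ell_1^2,\ell_2^2)=\sqrt2$.
   Context: For isomorphic Banach spaces $X_1,X_2$, $d(X_1,X_2)=\inf\{\|T\|\,\|T^{-1}\|\}$ over all linear isomorphisms $T$ of $X_1$ onto $X_2$; $D(X)=\sup\{d(X_1,X_2): X_1,X_2 \text{ isomorphic to } X\}$. $Y\oplus_p\mathbb{R}$ denotes $Y\times\mathbb{R}$ with norm $\|(y,t)\|=(\|y\|^p+|t|^p)^{1/p}$; $\ell_p^2$ is $\mathbb{R}^2$ with the $\ell_p$ norm. *)

theory Defs
  imports "HOL-Analysis.Analysis" "HOL-Library.Extended_Real"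
begin

definition is_norm :: "('a::real_vector \<Rightarrow> real) \<Rightarrow> bool" where
  "is_norm N \<longleftrightarrow> (\<forall>x. 0 \<le> N x) \<and> (\<forall>x. N x = 0 \<longleftrightarrow> x = 0)
     \<and> (\<forall>x y. N (x + y) \<le> N x + N y) \<and> (\<forall>c x. N (c *\<^sub>R x) = \<bar>c\<bar> * N x)"

definition opnorm :: "('a::real_vector \<Rightarrow> real) \<Rightarrow> ('b::real_vector \<Rightarrow> real) \<Rightarrow> ('a \<Rightarrow> 'b) \<Rightarrow> ereal" where
  "opnorm N1 N2 T = (SUP x\<in>{x. N1 x \<le> 1}. ereal (N2 (T x)))"

definition bm_dist :: "('a::real_vector \<Rightarrow> real) \<Rightarrow> ('b::real_vector \<Rightarrow> real) \<Rightarrow> ereal" where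
  "bm_dist N1 N2 = (INF T\<in>{T. linear T \<and> bij T \<and> opnorm N1 N2 T < \<infinity> \<and> opnorm N2 N1 (inv T) < \<infinity>}.
                      opnorm N1 N2 T * opnorm N2 N1 (inv T))"

text \<open>Norms on the underlying space of X equivalent to the given (complete) norm;
  every Banach space isomorphic to X is isometric to (X, N) for such an N.\<close>
definition equiv_norm :: "('a::real_normed_vector \<Rightarrow> real) \<Rightarrow> bool" where
  "equiv_norm N \<longleftrightarrow> is_norm N \<and> (\<exists>c C. 0 < c \<and> 0 < C \<and> (\<forall>x. c * norm x \<le> N x \<and> N x \<le> C * norm x))"

definition BM_D :: "'a::real_normed_vector itself \<Rightarrow> ereal" where
  "BM_D (t::'a itself) = (SUP p\<in>{p::('a \<Rightarrow> real) \<times> ('a \<Rightarrow> real). equiv_norm (fst p) \<and> equiv_norm (snd p)}.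
       bm_dist (fst p) (snd p))"

definition sum_p_norm :: "real \<Rightarrow> ('a::real_normed_vector \<times> real) \<Rightarrow> real" where
  "sum_p_norm p = (\<lambda>(y, t). (norm y powr p + \<bar>t\<bar> powr p) powr (1 / p))"

definition lp2_norm :: "real \<Rightarrow> (real \<times> real) \<Rightarrow> real" where
  "lp2_norm p = (\<lambda>(a, b). (\<bar>a\<bar> powr p + \<bar>b\<bar> powr p) powr (1 / p))"

end

theory Submission
  imports Defs
begin

text \<open>
  Let \<open>T\<close> be an isomorphism of \<open>Y \<oplus>\<^sub>1 \<real>\<close> onto \<open>Z \<oplus>\<^sub>2 \<real>\<close> with \<open>\<parallel>T\<parallel> \<le> m\<close> and
  \<open>\<parallel>T\<inverse>\<parallel> \<le> n\<close>, and let \<open>e = (0, 1)\<close>. The vector \<open>T\<inverse>(0, 1)\<close> has vanishing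
  \<open>Z\<close>-component under \<open>T\<close>; splitting it along \<open>e\<close> and \<open>Y \<times> 0\<close> yields a unit vector
  \<open>b \<in> Y \<times> 0\<close> such that the \<open>Z\<close>-components of \<open>T e\<close> and \<open>T b\<close> are collinear. The norm of
  \<open>Z \<oplus>\<^sub>2 \<real>\<close> is then Euclidean on the span of \<open>T e\<close> and \<open>T b\<close>, so the parallelogram law
  holds there, whereas \<open>e \<plusminus> b\<close> both have \<open>\<oplus>\<^sub>1\<close>-norm 2. Hence
  \<open>8 \<le> n\<^sup>2 (\<parallel>T(e+b)\<parallel>\<^sup>2 + \<parallel>T(e-b)\<parallel>\<^sup>2) = 2 n\<^sup>2 (\<parallel>T e\<parallel>\<^sup>2 + \<parallel>T b\<parallel>\<^sup>2) \<le> 4 m\<^sup>2 n\<^sup>2\<close>, i.e. \<open>m n \<ge> \<surd>2\<close>;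
  the identity of \<open>\<real>\<^sup>2\<close> attains this bound for \<open>\<ell>\<^sub>1\<^sup>2\<close> and \<open>\<ell>\<^sub>2\<^sup>2\<close>.
  If \<open>dim X > 1\<close>, a norming functional \<open>f\<close> (Hahn--Banach) splits \<open>X\<close> as \<open>ker f \<oplus> \<real> e\<close>
  with bounded projections, which gives equivalent norms on \<open>X\<close> modelled on
  \<open>ker f \<oplus>\<^sub>1 \<real>\<close> and \<open>ker f \<oplus>\<^sub>2 \<real>\<close>.
\<close>

section \<open>Norming functionals\<close>

text \<open>Partial functionals are represented by their graphs; domination by the norm forces
  such a graph to be single-valued.\<close>

definition norm_dominated :: "('a::real_normed_vector \<times> real) set \<Rightarrow> bool" where
  "norm_dominated G \<longleftrightarrow> subspace G \<and> (\<forall>(x, a) \<in> G. a \<le> norm x)"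

lemma norm_dominatedD:
  assumes "norm_dominated M"
  shows norm_dominated_zero: "(0, 0) \<in> M"
    and norm_dominated_add: "(m1, a1) \<in> M \<Longrightarrow> (m2, a2) \<in> M \<Longrightarrow> (m1 + m2, a1 + a2) \<in> M"
    and norm_dominated_scale: "(m, a) \<in> M \<Longrightarrow> (c *\<^sub>R m, c * a) \<in> M"
    and norm_dominated_bound: "(m, a) \<in> M \<Longrightarrow> a \<le> norm m"
  using assms subspace_0[of M] subspace_add[of M "(m1, a1)" "(m2, a2)"]
    subspace_scale[of M "(m, a)" c]
  by (auto simp: norm_dominated_def zero_prod_def)

lemma norm_dominated_extension_value:
  fixes M :: "('a::real_normed_vector \<times> real) set"
  assumes M: "norm_dominated M"
  shows "\<exists>c. \<forall>m a. (m, a) \<in> M \<longrightarrow> a - norm (m - x) \<le> c \<and> c \<le> norm (m + x) - a"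
proof -
  have gap: "a1 - norm (m1 - x) \<le> norm (m2 + x) - a2" if "(m1, a1) \<in> M" "(m2, a2) \<in> M"
    for m1 a1 m2 a2
  proof -
    have "a1 + a2 \<le> norm ((m1 - x) + (m2 + x))"
      using norm_dominated_bound[OF M norm_dominated_add[OF M that]] by simp
    also have "\<dots> \<le> norm (m1 - x) + norm (m2 + x)" by (rule norm_triangle_ineq)
    finally show ?thesis by simp
  qed
  define L where "L = {a - norm (m - x) | m a. (m, a) \<in> M}"
  have L: "L \<noteq> {}" "bdd_above L"
    unfolding L_def bdd_above_def using gap norm_dominated_zero[OF M] by blast+
  have "a - norm (m - x) \<le> Sup L \<and> Sup L \<le> norm (m + x) - a" if "(m, a) \<in> M" for m a
  proof
    show "a - norm (m - x) \<le> Sup L" by (rule cSup_upper[OF _ L(2)]) (use that L_def in blast)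
    show "Sup L \<le> norm (m + x) - a" by (rule cSup_least[OF L(1)]) (use that gap L_def in blast)
  qed
  then show ?thesis by blast
qed

lemma norm_dominated_shift_bound:
  assumes M: "norm_dominated M"
    and c: "\<And>m a. (m, a) \<in> M \<Longrightarrow> a - norm (m - x) \<le> c \<and> c \<le> norm (m + x) - a"
    and ma: "(m, a) \<in> M"
  shows "a + t * c \<le> norm (m + t *\<^sub>R x)"
proof (cases t "0::real" rule: linorder_cases)
  case less
  define s where "s = - t"
  have "s > 0" using less by (simp add: s_def)
  have "(inverse s *\<^sub>R m, inverse s * a) \<in> M" using norm_dominated_scale[OF M ma] .
  moreover have "inverse s *\<^sub>R m - x = inverse s *\<^sub>R (m - s *\<^sub>R x)"
    using \<open>s > 0\<close> by (simp add: algebra_simps)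
  ultimately have "inverse s * a - inverse s * norm (m - s *\<^sub>R x) \<le> c"
    using c \<open>s > 0\<close> by fastforce
  then have "a - norm (m - s *\<^sub>R x) \<le> s * c" using \<open>s > 0\<close> by (simp add: field_simps)
  then show ?thesis by (simp add: s_def)
next
  case equal
  then show ?thesis using norm_dominated_bound[OF M ma] by simp
next
  case greater
  have "(inverse t *\<^sub>R m, inverse t * a) \<in> M" using norm_dominated_scale[OF M ma] .
  moreover have "inverse t *\<^sub>R m + x = inverse t *\<^sub>R (m + t *\<^sub>R x)"
    using greater by (simp add: algebra_simps)
  ultimately have "c \<le> inverse t * norm (m + t *\<^sub>R x) - inverse t * a"
    using c greater by fastforce
  then show ?thesis using greater by (simp add: field_simps)
qed

lemma norm_dominated_extend:
  fixes M :: "('a::real_normed_vector \<times> real) set"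
  assumes M: "norm_dominated M" and x: "\<forall>a. (x, a) \<notin> M"
  shows "\<exists>M'. norm_dominated M' \<and> M \<subset> M'"
proof -
  obtain c where c: "\<And>m a. (m, a) \<in> M \<Longrightarrow> a - norm (m - x) \<le> c \<and> c \<le> norm (m + x) - a"
    using norm_dominated_extension_value[OF M, of x] by blast
  have "span M = M" using M by (simp add: norm_dominated_def)
  have "b \<le> norm y" if "(y, b) \<in> span (insert (x, c) M)" for y b
  proof -
    from that obtain t where "(y - t *\<^sub>R x, b - t * c) \<in> M"
      using \<open>span M = M\<close> by (auto simp: span_insert)
    from norm_dominated_shift_bound[OF M c this, of t] show ?thesis by simp
  qed
  then have "norm_dominated (span (insert (x, c) M))" by (auto simp: norm_dominated_def)
  moreover have "M \<subset> span (insert (x, c) M)"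
    using x span_superset[of "insert (x, c) M"] by blast
  ultimately show ?thesis by blast
qed

lemma subspace_Union_chain:
  assumes "C \<noteq> {}" and "\<And>S. S \<in> C \<Longrightarrow> subspace S"
    and chain: "\<And>S T. S \<in> C \<Longrightarrow> T \<in> C \<Longrightarrow> S \<subseteq> T \<or> T \<subseteq> S"
  shows "subspace (\<Union>C)"
  unfolding subspace_def
proof (intro conjI ballI allI)
  show "0 \<in> \<Union>C" using assms(1,2) subspace_0 by blast
next
  fix x y assume "x \<in> \<Union>C" "y \<in> \<Union>C"
  then obtain S T where ST: "S \<in> C" "T \<in> C" "x \<in> S" "y \<in> T" by blast
  with chain consider "x \<in> T" | "y \<in> S" by blast
  then show "x + y \<in> \<Union>C" using ST assms(2) subspace_add by cases blast+
next
  fix c x assume "x \<in> \<Union>C"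
  then show "c *\<^sub>R x \<in> \<Union>C" using assms(2) subspace_scale by blast
qed

lemma norm_dominated_total_extension:
  fixes u :: "'a::real_normed_vector"
  shows "\<exists>M. norm_dominated M \<and> (u, norm u) \<in> M \<and> (\<forall>x. \<exists>a. (x, a) \<in> M)"
proof -
  define A where "A = {G. norm_dominated G \<and> (u, norm u) \<in> G}"
  have "a \<le> norm x" if "(x, a) \<in> span {(u, norm u)}" for x a
  proof -
    from that obtain t where "x = t *\<^sub>R u" "a = t * norm u" by (auto simp: span_singleton)
    then show ?thesis by (simp add: mult_right_mono)
  qed
  then have "span {(u, norm u)} \<in> A"
    unfolding A_def norm_dominated_def by (auto intro: span_base)
  moreover have "\<Union>C \<in> A" if "C \<noteq> {}" "subset.chain A C" for C
    using that subspace_Union_chain[of C]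
    unfolding A_def norm_dominated_def subset_chain_def by blast
  ultimately obtain M where M: "M \<in> A" and max: "\<And>X. X \<in> A \<Longrightarrow> M \<subseteq> X \<Longrightarrow> X = M"
    using subset_Zorn_nonempty[of A] by blast
  have "\<exists>a. (x, a) \<in> M" for x
  proof (rule ccontr)
    assume "\<nexists>a. (x, a) \<in> M"
    then obtain M' where "norm_dominated M'" "M \<subset> M'"
      using norm_dominated_extend M unfolding A_def by blast
    then show False using max[of M'] M unfolding A_def by blast
  qed
  then show ?thesis using M unfolding A_def by blast
qed

lemma linear_functional_of_norm_dominated:
  fixes M :: "('a::real_normed_vector \<times> real) set"
  assumes M: "norm_dominated M" and total: "\<And>x. \<exists>a. (x, a) \<in> M"
  shows "\<exists>f. linear f \<and> (\<forall>x. \<bar>f x\<bar> \<le> norm x) \<and> (\<forall>x a. (x, a) \<in> M \<longrightarrow> f x = a)"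
proof -
  note add = norm_dominated_add[OF M] and scale = norm_dominated_scale[OF M]
    and bnd = norm_dominated_bound[OF M]
  have unique: "a = b" if "(x, a) \<in> M" "(x, b) \<in> M" for x a b
  proof -
    have zero: "(0, a - b) \<in> M" "(0, b - a) \<in> M"
      using add[OF that(1) scale[OF that(2), of "-1"]] add[OF that(2) scale[OF that(1), of "-1"]]
      by simp_all
    show ?thesis using bnd[OF zero(1)] bnd[OF zero(2)] by simp
  qed
  define f where "f x = (SOME a. (x, a) \<in> M)" for x
  have graph: "(x, f x) \<in> M" for x unfolding f_def using total by (rule someI_ex)
  have "linear f"
  proof (rule linearI)
    show "f (x + y) = f x + f y" for x y using unique graph add by blast
    show "f (c *\<^sub>R x) = c *\<^sub>R f x" for c x using unique graph scale by fastforce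
  qed
  moreover have "\<bar>f x\<bar> \<le> norm x" for x
    using bnd[OF graph[of x]] bnd[OF scale[OF graph[of x], of "-1"]] by (simp add: abs_le_iff)
  ultimately show ?thesis using unique graph by blast
qed

lemma norming_functional:
  fixes u :: "'a::real_normed_vector"
  shows "\<exists>f. linear f \<and> (\<forall>x. \<bar>f x\<bar> \<le> norm x) \<and> f u = norm u"
  using norm_dominated_total_extension[of u] linear_functional_of_norm_dominated by metis

section \<open>Operator norms and the Banach--Mazur distance\<close>

lemma is_norm_zero: "is_norm N \<Longrightarrow> N 0 = 0"
  by (simp add: is_norm_def)

lemma bij_linear_imp_inv_linear:
  assumes "linear T" and "bij T"
  shows "linear (inv T)"
proof (rule linearI)
  have inv: "T (inv T y) = y" "inv T (T x) = x" for x y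
    using assms(2) by (simp_all add: bij_is_surj surj_f_inv_f bij_is_inj)
  show "inv T (x + y) = inv T x + inv T y" for x y
  proof -
    have "x + y = T (inv T x + inv T y)" by (simp add: linear_add[OF assms(1)] inv)
    then show ?thesis by (simp add: inv)
  qed
  show "inv T (c *\<^sub>R x) = c *\<^sub>R inv T x" for c x
  proof -
    have "c *\<^sub>R x = T (c *\<^sub>R inv T x)" by (simp add: linear_scale[OF assms(1)] inv)
    then show ?thesis by (simp add: inv)
  qed
qed

lemma opnorm_nonneg:
  assumes "is_norm N1" and "is_norm N2"
  shows "0 \<le> opnorm N1 N2 T"
  unfolding opnorm_def by (rule SUP_upper2[of 0]) (use assms in \<open>auto simp: is_norm_def is_norm_zero\<close>)

lemma opnorm_le:
  assumes "0 \<le> m" and "\<And>x. N2 (T x) \<le> m * N1 x"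
  shows "opnorm N1 N2 T \<le> ereal m"
  unfolding opnorm_def
proof (rule SUP_least)
  fix x assume "x \<in> {x. N1 x \<le> 1}"
  then have "m * N1 x \<le> m" using assms(1) by (simp add: mult_left_le)
  then show "ereal (N2 (T x)) \<le> ereal m" using assms(2)[of x] by simp
qed

lemma norm_image_le_opnorm:
  assumes N1: "is_norm N1" and N2: "is_norm N2" and T: "linear T"
    and m: "opnorm N1 N2 T = ereal m"
  shows "N2 (T x) \<le> m * N1 x"
proof (cases "x = 0")
  case True
  then show ?thesis using N1 N2 linear_0[OF T] by (simp add: is_norm_zero)
next
  case False
  then have pos: "0 < N1 x" using N1 unfolding is_norm_def by (metis order_less_le)
  let ?y = "(1 / N1 x) *\<^sub>R x"
  have "N1 ?y = 1" using N1 pos False by (simp add: is_norm_def)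
  then have "ereal (N2 (T ?y)) \<le> opnorm N1 N2 T" unfolding opnorm_def by (intro SUP_upper) simp
  moreover have "N2 (T ?y) = N2 (T x) / N1 x" using N2 pos by (simp add: is_norm_def linear_scale[OF T])
  ultimately show ?thesis using m pos by (simp add: field_simps)
qed

lemma bm_dist_le:
  assumes "is_norm N1" "is_norm N2" "linear T" "bij T" "0 \<le> m" "0 \<le> n"
    and "\<And>x. N2 (T x) \<le> m * N1 x" and "\<And>y. N1 (inv T y) \<le> n * N2 y"
  shows "bm_dist N1 N2 \<le> ereal (m * n)"
proof -
  have m: "opnorm N1 N2 T \<le> ereal m" and n: "opnorm N2 N1 (inv T) \<le> ereal n"
    using assms by (simp_all add: opnorm_le)
  then have "bm_dist N1 N2 \<le> opnorm N1 N2 T * opnorm N2 N1 (inv T)"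
    unfolding bm_dist_def using assms(3,4) by (intro INF_lower) (auto simp: le_less_trans)
  also have "\<dots> \<le> ereal m * ereal n"
    using m n assms(5) opnorm_nonneg[OF assms(2,1)] by (intro ereal_mult_mono) auto
  finally show ?thesis by simp
qed

lemma le_bm_dist:
  assumes N1: "is_norm N1" and N2: "is_norm N2"
    and bound: "\<And>T m n. linear T \<Longrightarrow> bij T \<Longrightarrow> 0 \<le> m \<Longrightarrow> 0 \<le> n \<Longrightarrow>
      (\<And>x. N2 (T x) \<le> m * N1 x) \<Longrightarrow> (\<And>y. N1 (inv T y) \<le> n * N2 y) \<Longrightarrow> c \<le> m * n"
  shows "ereal c \<le> bm_dist N1 N2"
  unfolding bm_dist_def
proof (rule INF_greatest, clarify)
  fix T
  assume T: "linear T" "bij T"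
    and finite: "opnorm N1 N2 T < \<infinity>" "opnorm N2 N1 (inv T) < \<infinity>"
  have T': "linear (inv T)" using T by (rule bij_linear_imp_inv_linear)
  obtain m where m: "opnorm N1 N2 T = ereal m"
    using finite(1) opnorm_nonneg[OF N1 N2] by (cases "opnorm N1 N2 T") auto
  obtain n where n: "opnorm N2 N1 (inv T) = ereal n"
    using finite(2) opnorm_nonneg[OF N2 N1] by (cases "opnorm N2 N1 (inv T)") auto
  have "c \<le> m * n"
    using bound[OF T, of m n] opnorm_nonneg[OF N1 N2, of T] opnorm_nonneg[OF N2 N1, of "inv T"]
      norm_image_le_opnorm[OF N1 N2 T(1) m] norm_image_le_opnorm[OF N2 N1 T' n] m n
    by simp
  then show "ereal c \<le> opnorm N1 N2 T * opnorm N2 N1 (inv T)" using m n by simp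
qed

section \<open>The \<open>\<ell>\<^sub>1\<close>- and \<open>\<ell>\<^sub>2\<close>-sum norms\<close>

definition l1_sum_norm :: "('a \<Rightarrow> 'b::real_normed_vector) \<Rightarrow> ('a \<Rightarrow> real) \<Rightarrow> 'a \<Rightarrow> real" where
  "l1_sum_norm P f x = norm (P x) + \<bar>f x\<bar>"

definition l2_sum_norm :: "('a \<Rightarrow> 'b::real_normed_vector) \<Rightarrow> ('a \<Rightarrow> real) \<Rightarrow> 'a \<Rightarrow> real" where
  "l2_sum_norm P f x = sqrt ((norm (P x))\<^sup>2 + (f x)\<^sup>2)"

lemma sum_p_norm_1: "sum_p_norm 1 = l1_sum_norm fst snd"
  by (auto simp: fun_eq_iff sum_p_norm_def l1_sum_norm_def)

lemma sum_p_norm_2: "sum_p_norm 2 = l2_sum_norm fst snd"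
  by (auto simp: fun_eq_iff sum_p_norm_def l2_sum_norm_def powr_half_sqrt)

lemma lp2_norm_eq_sum_p_norm: "lp2_norm p = sum_p_norm p"
  by (simp add: fun_eq_iff lp2_norm_def sum_p_norm_def)

lemma is_norm_l1_sum_norm:
  assumes P: "linear P" and f: "linear f" and sep: "\<And>x. P x = 0 \<Longrightarrow> f x = 0 \<Longrightarrow> x = 0"
  shows "is_norm (l1_sum_norm P f)"
  unfolding is_norm_def l1_sum_norm_def
proof (intro conjI allI)
  fix x
  show "0 \<le> norm (P x) + \<bar>f x\<bar>" by simp
  show "norm (P x) + \<bar>f x\<bar> = 0 \<longleftrightarrow> x = 0"
    using sep linear_0[OF P] linear_0[OF f] by (auto simp: add_nonneg_eq_0_iff)
next
  fix x y
  show "norm (P (x + y)) + \<bar>f (x + y)\<bar> \<le> norm (P x) + \<bar>f x\<bar> + (norm (P y) + \<bar>f y\<bar>)"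
    using norm_triangle_ineq[of "P x" "P y"] abs_triangle_ineq[of "f x" "f y"]
    by (simp add: linear_add[OF P] linear_add[OF f])
next
  fix c x
  show "norm (P (c *\<^sub>R x)) + \<bar>f (c *\<^sub>R x)\<bar> = \<bar>c\<bar> * (norm (P x) + \<bar>f x\<bar>)"
    by (simp add: linear_scale[OF P] linear_scale[OF f] abs_mult distrib_left)
qed

lemma is_norm_l2_sum_norm:
  assumes P: "linear P" and f: "linear f" and sep: "\<And>x. P x = 0 \<Longrightarrow> f x = 0 \<Longrightarrow> x = 0"
  shows "is_norm (l2_sum_norm P f)"
  unfolding is_norm_def l2_sum_norm_def
proof (intro conjI allI)
  fix x
  show "0 \<le> sqrt ((norm (P x))\<^sup>2 + (f x)\<^sup>2)" by simp
  show "sqrt ((norm (P x))\<^sup>2 + (f x)\<^sup>2) = 0 \<longleftrightarrow> x = 0"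
    using sep linear_0[OF P] linear_0[OF f] by auto
next
  fix x y
  have "sqrt ((norm (P (x + y)))\<^sup>2 + (f (x + y))\<^sup>2)
      \<le> sqrt ((norm (P x) + norm (P y))\<^sup>2 + (f x + f y)\<^sup>2)"
    by (simp add: linear_add[OF P] linear_add[OF f] power_mono norm_triangle_ineq)
  also have "\<dots> \<le> sqrt ((norm (P x))\<^sup>2 + (f x)\<^sup>2) + sqrt ((norm (P y))\<^sup>2 + (f y)\<^sup>2)"
    by (rule real_sqrt_sum_squares_triangle_ineq)
  finally show "sqrt ((norm (P (x + y)))\<^sup>2 + (f (x + y))\<^sup>2)
      \<le> sqrt ((norm (P x))\<^sup>2 + (f x)\<^sup>2) + sqrt ((norm (P y))\<^sup>2 + (f y)\<^sup>2)" .
next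
  fix c x
  have "(norm (P (c *\<^sub>R x)))\<^sup>2 + (f (c *\<^sub>R x))\<^sup>2 = c\<^sup>2 * ((norm (P x))\<^sup>2 + (f x)\<^sup>2)"
    by (simp add: linear_scale[OF P] linear_scale[OF f] algebra_simps)
  then show "sqrt ((norm (P (c *\<^sub>R x)))\<^sup>2 + (f (c *\<^sub>R x))\<^sup>2) = \<bar>c\<bar> * sqrt ((norm (P x))\<^sup>2 + (f x)\<^sup>2)"
    by (simp add: real_sqrt_mult)
qed

lemma l2_sum_norm_le_l1_sum_norm: "l2_sum_norm P f x \<le> l1_sum_norm P f x"
  using sqrt_sum_squares_le_sum_abs[of "norm (P x)" "f x"]
  by (simp add: l1_sum_norm_def l2_sum_norm_def)

lemma l1_sum_norm_le_sqrt2_l2_sum_norm: "l1_sum_norm P f x \<le> sqrt 2 * l2_sum_norm P f x"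
proof -
  have "(norm (P x) + \<bar>f x\<bar>)\<^sup>2 \<le> 2 * ((norm (P x))\<^sup>2 + (f x)\<^sup>2)"
    using zero_le_power2[of "norm (P x) - \<bar>f x\<bar>"] by (simp add: power2_diff power2_sum)
  then have "norm (P x) + \<bar>f x\<bar> \<le> sqrt (2 * ((norm (P x))\<^sup>2 + (f x)\<^sup>2))" by (rule real_le_rsqrt)
  also have "\<dots> = sqrt 2 * sqrt ((norm (P x))\<^sup>2 + (f x)\<^sup>2)" by (rule real_sqrt_mult)
  finally show ?thesis by (simp add: l1_sum_norm_def l2_sum_norm_def)
qed

lemma l2_sum_norm_parallelogram:
  assumes Q: "linear Q" and g: "linear g" and "Q a = \<alpha> *\<^sub>R p" and "Q b = \<beta> *\<^sub>R p"
  shows "(l2_sum_norm Q g (a + b))\<^sup>2 + (l2_sum_norm Q g (a - b))\<^sup>2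
    = 2 * ((l2_sum_norm Q g a)\<^sup>2 + (l2_sum_norm Q g b)\<^sup>2)"
proof -
  have sq: "(l2_sum_norm Q g x)\<^sup>2 = \<gamma>\<^sup>2 * (norm p)\<^sup>2 + (g x)\<^sup>2" if "Q x = \<gamma> *\<^sub>R p" for x \<gamma>
    using that by (simp add: l2_sum_norm_def power_mult_distrib)
  have "Q (a + b) = (\<alpha> + \<beta>) *\<^sub>R p" "Q (a - b) = (\<alpha> - \<beta>) *\<^sub>R p"
    using assms by (simp_all add: linear_add linear_diff scaleR_add_left scaleR_diff_left)
  from this[THEN sq] sq[OF assms(3)] sq[OF assms(4)] show ?thesis
    by (simp add: linear_add[OF g] linear_diff[OF g] power2_eq_square algebra_simps)
qed

section \<open>The lower bound \<open>\<surd>2\<close>\<close>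

lemma kernel_vector_with_collinear_image:
  fixes f :: "'v::real_vector \<Rightarrow> real"
  assumes S: "linear S" and f: "linear f" and "f e = 1" and "S z = 0" "z \<noteq> 0"
    and "f w = 0" "w \<noteq> 0"
  shows "\<exists>b p \<alpha> \<beta>. b \<noteq> 0 \<and> f b = 0 \<and> S e = \<alpha> *\<^sub>R p \<and> S b = \<beta> *\<^sub>R p"
proof (cases "z = f z *\<^sub>R e")
  case True
  then have "f z *\<^sub>R S e = 0" "f z \<noteq> 0"
    using \<open>S z = 0\<close> \<open>z \<noteq> 0\<close> linear_scale[OF S, of "f z" e] by auto
  then have "S e = 0 *\<^sub>R S w" by simp
  then show ?thesis using assms(6,7)
    by (intro exI[of _ w] exI[of _ "S w"] exI[of _ 0] exI[of _ 1]) simp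
next
  case False
  have "z - f z *\<^sub>R e \<noteq> 0" "f (z - f z *\<^sub>R e) = 0" "S (z - f z *\<^sub>R e) = (- f z) *\<^sub>R S e"
    using False S f \<open>f e = 1\<close> \<open>S z = 0\<close> by (simp_all add: linear_diff linear_scale)
  then show ?thesis
    by (intro exI[of _ "z - f z *\<^sub>R e"] exI[of _ "S e"] exI[of _ 1] exI[of _ "- f z"]) simp
qed

lemma sqrt2_le_bm_dist_l1_l2_sum_norm:
  fixes P :: "'v::real_vector \<Rightarrow> 'w::real_normed_vector"
    and Q :: "'u::real_vector \<Rightarrow> 'z::real_normed_vector"
  assumes P: "linear P" and f: "linear f" and sepP: "\<And>x. P x = 0 \<Longrightarrow> f x = 0 \<Longrightarrow> x = 0"
    and e: "P e = 0" "f e = 1" and w: "f w = 0" "w \<noteq> 0"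
    and Q: "linear Q" and g: "linear g" and sepQ: "\<And>x. Q x = 0 \<Longrightarrow> g x = 0 \<Longrightarrow> x = 0"
    and d: "Q d = 0" "d \<noteq> 0"
  shows "ereal (sqrt 2) \<le> bm_dist (l1_sum_norm P f) (l2_sum_norm Q g)"
proof (rule le_bm_dist)
  show "is_norm (l1_sum_norm P f)" using P f sepP by (rule is_norm_l1_sum_norm)
  show "is_norm (l2_sum_norm Q g)" using Q g sepQ by (rule is_norm_l2_sum_norm)
  let ?N1 = "l1_sum_norm P f" and ?N2 = "l2_sum_norm Q g"
  fix T m n
  assume T: "linear T" "bij T" and mn: "0 \<le> m" "0 \<le> n"
    and Tm: "\<And>x. ?N2 (T x) \<le> m * ?N1 x" and Tn: "\<And>y. ?N1 (inv T y) \<le> n * ?N2 y"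
  have "T (inv T d) = d" using T(2) by (simp add: bij_is_surj surj_f_inv_f)
  then have kernel: "(Q \<circ> T) (inv T d) = 0" "inv T d \<noteq> 0" using d linear_0[OF T(1)] by auto
  have "\<exists>b p \<alpha> \<beta>. b \<noteq> 0 \<and> f b = 0 \<and> (Q \<circ> T) e = \<alpha> *\<^sub>R p \<and> (Q \<circ> T) b = \<beta> *\<^sub>R p"
    by (rule kernel_vector_with_collinear_image[OF linear_compose[OF T(1) Q] f e(2) kernel w])
  then obtain b p \<alpha> \<beta> where b: "b \<noteq> 0" "f b = 0" "Q (T e) = \<alpha> *\<^sub>R p" "Q (T b) = \<beta> *\<^sub>R p"
    by auto
  have "P b \<noteq> 0" using sepP b by blast
  define b1 where "b1 = (1 / norm (P b)) *\<^sub>R b"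
  have b1: "f b1 = 0" "norm (P b1) = 1" "Q (T b1) = (\<beta> / norm (P b)) *\<^sub>R p"
    using b \<open>P b \<noteq> 0\<close> unfolding b1_def
    by (simp_all add: linear_scale[OF f] linear_scale[OF P] linear_scale[OF T(1)] linear_scale[OF Q])
  have N1: "?N1 e = 1" "?N1 b1 = 1" "?N1 (e + b1) = 2" "?N1 (e - b1) = 2"
    using e b1 by (simp_all add: l1_sum_norm_def linear_add[OF P] linear_add[OF f]
        linear_diff[OF P] linear_diff[OF f])
  have lower: "4 \<le> n\<^sup>2 * (?N2 (T x))\<^sup>2" if "?N1 x = 2" for x
  proof -
    have "2 \<le> n * ?N2 (T x)" using Tn[of "T x"] T that by (simp add: bij_is_inj)
    then have "2\<^sup>2 \<le> (n * ?N2 (T x))\<^sup>2" by (rule power_mono) simp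
    then show ?thesis by (simp add: power_mult_distrib)
  qed
  have "8 \<le> n\<^sup>2 * ((?N2 (T e + T b1))\<^sup>2 + (?N2 (T e - T b1))\<^sup>2)"
    using lower[OF N1(3)] lower[OF N1(4)] by (simp add: linear_add[OF T(1)] linear_diff[OF T(1)] distrib_left)
  also have "\<dots> = 2 * n\<^sup>2 * ((?N2 (T e))\<^sup>2 + (?N2 (T b1))\<^sup>2)"
    using l2_sum_norm_parallelogram[OF Q g b(3) b1(3)] by simp
  also have "\<dots> \<le> 2 * n\<^sup>2 * (m\<^sup>2 + m\<^sup>2)"
  proof -
    have "(?N2 (T x))\<^sup>2 \<le> m\<^sup>2" if "?N1 x = 1" for x
      using Tm[of x] that by (intro power_mono) (simp_all add: l2_sum_norm_def)
    then show ?thesis using N1(1,2) by (intro mult_left_mono add_mono) auto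
  qed
  finally have "2 \<le> (m * n)\<^sup>2" by (simp add: power_mult_distrib)
  then show "sqrt 2 \<le> m * n" using mn by (simp add: real_le_lsqrt)
qed

lemma sqrt2_le_bm_dist_sum_p_norm:
  fixes y :: "'y::real_normed_vector"
  assumes "y \<noteq> 0"
  shows "ereal (sqrt 2)
    \<le> bm_dist (sum_p_norm 1 :: 'y \<times> real \<Rightarrow> real) (sum_p_norm 2 :: 'z::real_normed_vector \<times> real \<Rightarrow> real)"
  unfolding sum_p_norm_1 sum_p_norm_2
  by (rule sqrt2_le_bm_dist_l1_l2_sum_norm[where e = "(0, 1)" and w = "(y, 0)" and d = "(0, 1)"])
    (use assms in \<open>auto simp: linear_fst linear_snd prod_eq_iff\<close>)

lemma bm_dist_lp2_norm_1_2: "bm_dist (lp2_norm 1) (lp2_norm 2) = ereal (sqrt 2)"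
proof (rule antisym)
  have "is_norm (lp2_norm 1)" "is_norm (lp2_norm 2)"
    unfolding lp2_norm_eq_sum_p_norm sum_p_norm_1 sum_p_norm_2
    by (auto intro!: is_norm_l1_sum_norm is_norm_l2_sum_norm linear_fst linear_snd simp: prod_eq_iff)
  then have "bm_dist (lp2_norm 1) (lp2_norm 2) \<le> ereal (1 * sqrt 2)"
    unfolding lp2_norm_eq_sum_p_norm sum_p_norm_1 sum_p_norm_2
    by (rule bm_dist_le[where T = id])
      (simp_all add: linear_id l2_sum_norm_le_l1_sum_norm l1_sum_norm_le_sqrt2_l2_sum_norm)
  then show "bm_dist (lp2_norm 1) (lp2_norm 2) \<le> ereal (sqrt 2)" by simp
  show "ereal (sqrt 2) \<le> bm_dist (lp2_norm 1) (lp2_norm 2)"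
    unfolding lp2_norm_eq_sum_p_norm by (rule sqrt2_le_bm_dist_sum_p_norm[of "1::real"]) simp
qed

lemma equiv_norm_comparable:
  assumes "equiv_norm N" "is_norm N'" "0 < a" "0 < b"
    and "\<And>x. a * N x \<le> N' x" "\<And>x. N' x \<le> b * N x"
  shows "equiv_norm N'"
proof -
  obtain c C where "0 < c" "0 < C" and cC: "\<And>x. c * norm x \<le> N x \<and> N x \<le> C * norm x"
    using assms(1) unfolding equiv_norm_def by blast
  have "(a * c) * norm x \<le> N' x \<and> N' x \<le> (b * C) * norm x" for x
  proof -
    have "a * (c * norm x) \<le> a * N x" "b * N x \<le> b * (C * norm x)"
      using cC[of x] assms(3,4) by (simp_all add: mult_left_mono)
    then show ?thesis using assms(5,6)[of x] unfolding mult.assoc by linarith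
  qed
  then show ?thesis unfolding equiv_norm_def
    using assms(2) mult_pos_pos[OF assms(3) \<open>0 < c\<close>] mult_pos_pos[OF assms(4) \<open>0 < C\<close>] by blast
qed

lemma projection_onto_kernel:
  assumes f: "linear f" "\<And>x. \<bar>f x\<bar> \<le> norm x" and e: "norm e = 1" "f e = 1"
  defines "P \<equiv> \<lambda>x. x - f x *\<^sub>R e"
  shows "linear P" and "P e = 0" and "\<And>x. f (P x) = 0"
    and "\<And>x. P x = 0 \<Longrightarrow> f x = 0 \<Longrightarrow> x = 0"
    and "equiv_norm (l1_sum_norm P f)" and "equiv_norm (l2_sum_norm P f)"
proof -
  show P: "linear P" "P e = 0" "\<And>x. f (P x) = 0"
    unfolding P_def using f(1) e(2)
    by (auto intro!: linearI simp: linear_add linear_scale linear_diff algebra_simps)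
  show sep: "x = 0" if "P x = 0" "f x = 0" for x using that unfolding P_def by simp
  have "norm x \<le> l1_sum_norm P f x" "l1_sum_norm P f x \<le> 3 * norm x" for x
    using norm_triangle_ineq[of "P x" "f x *\<^sub>R e"] norm_triangle_ineq4[of x "f x *\<^sub>R e"] f(2)[of x] e(1)
    unfolding l1_sum_norm_def P_def by simp_all
  then show N1: "equiv_norm (l1_sum_norm P f)"
    unfolding equiv_norm_def using is_norm_l1_sum_norm[OF P(1) f(1) sep]
    by (intro conjI exI[of _ 1] exI[of _ 3]) auto
  have "l1_sum_norm P f x / sqrt 2 \<le> l2_sum_norm P f x" for x
    using l1_sum_norm_le_sqrt2_l2_sum_norm[of P f x] by (simp add: divide_le_eq mult.commute)
  then show "equiv_norm (l2_sum_norm P f)"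
    using equiv_norm_comparable[OF N1 is_norm_l2_sum_norm[OF P(1) f(1) sep], of "1 / sqrt 2" 1]
      l2_sum_norm_le_l1_sum_norm[of P f]
    by simp
qed

lemma sqrt2_le_BM_D:
  fixes u v :: "'x::real_normed_vector"
  assumes "u \<noteq> v" and "independent {u, v}"
  shows "ereal (sqrt 2) \<le> BM_D TYPE('x)"
proof -
  have "u \<noteq> 0" using assms(2) dependent_zero by blast
  have "independent (insert v {u})" using assms(2) by (metis insert_commute)
  then have "v \<notin> span {u}" using assms(1) by (simp add: independent_insert)
  obtain f where f: "linear f" "\<And>x. \<bar>f x\<bar> \<le> norm x" "f u = norm u"
    using norming_functional by blast
  define e where "e = (1 / norm u) *\<^sub>R u"
  have e: "norm e = 1" "f e = 1" "e \<noteq> 0"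
    using \<open>u \<noteq> 0\<close> f unfolding e_def by (simp_all add: linear_scale[OF f(1)])
  define P where "P x = x - f x *\<^sub>R e" for x
  note P = projection_onto_kernel[OF f(1,2) e(1,2), folded P_def]
  have "P v \<noteq> 0"
  proof
    assume "P v = 0"
    then have "v = (f v / norm u) *\<^sub>R u" unfolding P_def e_def by simp
    then show False using \<open>v \<notin> span {u}\<close> by (metis span_base span_scale singletonI)
  qed
  have "ereal (sqrt 2) \<le> bm_dist (l1_sum_norm P f) (l2_sum_norm P f)"
    by (rule sqrt2_le_bm_dist_l1_l2_sum_norm[OF P(1) f(1) P(4) P(2) e(2) P(3) \<open>P v \<noteq> 0\<close>
          P(1) f(1) P(4) P(2) e(3)])
  also have "\<dots> \<le> BM_D TYPE('x)"
    unfolding BM_D_def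
    by (rule SUP_upper2[of "(l1_sum_norm P f, l2_sum_norm P f)"]) (use P(5,6) in auto)
  finally show ?thesis .
qed

theorem mainTheorem3:
  shows "((\<exists>u v::'x::banach. u \<noteq> v \<and> independent {u, v}) \<longrightarrow> ereal (sqrt 2) \<le> BM_D (TYPE('x)))
     \<and> ((\<exists>y::'y::banach. y \<noteq> 0) \<longrightarrow>
          bm_dist (sum_p_norm 1 :: 'y \<times> real \<Rightarrow> real) (sum_p_norm 2) \<ge> bm_dist (lp2_norm 1) (lp2_norm 2))
     \<and> bm_dist (lp2_norm 1) (lp2_norm 2) = ereal (sqrt 2)"
proof (intro conjI impI)
  show "ereal (sqrt 2) \<le> BM_D TYPE('x)" if "\<exists>u v::'x. u \<noteq> v \<and> independent {u, v}"
    using that by (elim exE conjE) (rule sqrt2_le_BM_D)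
  show "bm_dist (lp2_norm 1) (lp2_norm 2) \<le> bm_dist (sum_p_norm 1 :: 'y \<times> real \<Rightarrow> real) (sum_p_norm 2)"
    if "\<exists>y::'y. y \<noteq> 0"
    using that unfolding bm_dist_lp2_norm_1_2 by (elim exE) (rule sqrt2_le_bm_dist_sum_p_norm)
  show "bm_dist (lp2_norm 1) (lp2_norm 2) = ereal (sqrt 2)" by (rule bm_dist_lp2_norm_1_2)
qed

end
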